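(* Let $q\ge 2$, $n\ge 1$ and $\varepsilon\in\mathbb{N}$ with $\varepsilon\le n$. Let $x\in\mathbb{Z}_q^n$ be a hidden vector, and suppose the attacker has access to an oracle $\texttt{Match}_{x,\varepsilon}$ which, on a query $y\in\mathbb{Z}_q^n$, returns $1$ if $d(x,y)\le\varepsilon$ and $0$ otherwise, and which additionally reveals the value $d(x,y)$ whenever $d(x,y)\le\varepsilon$. Then there is an adaptive query strategy that recovers $x$ using, in the worst case, $\mathcal{O}(q^{n-\varepsilon}+q\varepsilon)$ queries to $\texttt{Match}_{x,\varepsilon}$.
   Context: $\mathbb{Z}_q^n=\{0,\dots,q-1\}^n$ is equipped with the Hamming distance $d(x,y)=|\{i\in\{1,\dots,n\}: x_i\neq y_i\}|$. The attacker may choose each query adaptively based on previous oracle answers; complexity is measured as the number of oracle queries. *)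

theory Defs
  imports Complex_Main
begin

definition vecs :: "nat \<Rightarrow> nat \<Rightarrow> nat list set" where
  "vecs q n = {x. length x = n \<and> (\<forall>i<n. x ! i < q)}"

definition hdist :: "nat list \<Rightarrow> nat list \<Rightarrow> nat" where
  "hdist x y = card {i. i < length x \<and> x ! i \<noteq> y ! i}"

text \<open>Answer of Match_{x,eps} on query y: None encodes 0 (d(x,y) > eps);
  Some d encodes 1 together with the revealed distance d = d(x,y) <= eps.\<close>
definition match_oracle :: "nat list \<Rightarrow> nat \<Rightarrow> nat list \<Rightarrow> nat option" where
  "match_oracle x eps y = (if hdist x y \<le> eps then Some (hdist x y) else None)"

text \<open>Adaptive query strategies as decision trees.\<close>
datatype strategy = Done "nat list" | Query "nat list" "nat option \<Rightarrow> strategy"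

primrec run_output :: "nat list \<Rightarrow> nat \<Rightarrow> strategy \<Rightarrow> nat list" where
  "run_output x eps (Done g) = g"
| "run_output x eps (Query y f) = run_output x eps (f (match_oracle x eps y))"

primrec cost :: "nat list \<Rightarrow> nat \<Rightarrow> strategy \<Rightarrow> nat" where
  "cost x eps (Done g) = 0"
| "cost x eps (Query y f) = Suc (cost x eps (f (match_oracle x eps y)))"

primrec queries_ok :: "nat \<Rightarrow> nat \<Rightarrow> nat list \<Rightarrow> nat \<Rightarrow> strategy \<Rightarrow> bool" where
  "queries_ok q n x eps (Done g) = True"
| "queries_ok q n x eps (Query y f) =
     (y \<in> vecs q n \<and> queries_ok q n x eps (f (match_oracle x eps y)))"

end

theory Submission
  imports Defs
begin

text \<open>Phase one queries every vector whose last \<open>eps\<close> coordinates are zero; the one agreeing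
  with \<open>x\<close> on the first \<open>n - eps\<close> coordinates is within distance \<open>eps\<close>, so some query \<open>y\<close>
  is answered with its distance. Phase two replaces coordinate \<open>i\<close> of \<open>y\<close> by each \<open>v < q\<close>
  in turn: the distance becomes \<open>d(x, y[i := x!i]) + [v \<noteq> x!i] \<le> eps + 1\<close>, so if a negative
  answer is ranked as \<open>eps + 1\<close>, the unique value with the least answer is \<open>x!i\<close>. This costs
  \<open>q^(n-eps) + n q\<close> queries, and \<open>n q = (n - eps) q + eps q \<le> q^(n-eps) + eps q\<close>.\<close>

primrec query_batch :: "nat list list \<Rightarrow> (nat option list \<Rightarrow> strategy) \<Rightarrow> strategy" where
  "query_batch [] k = k []"
| "query_batch (y # ys) k = Query y (\<lambda>a. query_batch ys (\<lambda>as. k (a # as)))"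

lemma run_output_query_batch:
  "run_output x eps (query_batch ys k) = run_output x eps (k (map (match_oracle x eps) ys))"
  by (induction ys arbitrary: k) auto

lemma cost_query_batch:
  "cost x eps (query_batch ys k) = length ys + cost x eps (k (map (match_oracle x eps) ys))"
  by (induction ys arbitrary: k) auto

lemma queries_ok_query_batch:
  "queries_ok q n x eps (query_batch ys k) \<longleftrightarrow>
     set ys \<subseteq> vecs q n \<and> queries_ok q n x eps (k (map (match_oracle x eps) ys))"
  by (induction ys arbitrary: k) auto

primrec query_batches :: "nat list list list \<Rightarrow> (nat option list list \<Rightarrow> strategy) \<Rightarrow> strategy" where
  "query_batches [] k = k []"
| "query_batches (ys # yss) k = query_batch ys (\<lambda>as. query_batches yss (\<lambda>ass. k (as # ass)))"

lemma run_output_query_batches: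
  "run_output x eps (query_batches yss k) =
     run_output x eps (k (map (map (match_oracle x eps)) yss))"
  by (induction yss arbitrary: k) (auto simp: run_output_query_batch)

lemma cost_query_batches:
  "cost x eps (query_batches yss k) =
     sum_list (map length yss) + cost x eps (k (map (map (match_oracle x eps)) yss))"
  by (induction yss arbitrary: k) (auto simp: cost_query_batch)

lemma queries_ok_query_batches:
  "queries_ok q n x eps (query_batches yss k) \<longleftrightarrow>
     (\<forall>ys \<in> set yss. set ys \<subseteq> vecs q n) \<and>
     queries_ok q n x eps (k (map (map (match_oracle x eps)) yss))"
  by (induction yss arbitrary: k) (auto simp: queries_ok_query_batch)

lemma hdist_list_update:
  assumes "length y = length x" "i < length x"
  shows "hdist x (y[i := v]) = hdist x (y[i := x ! i]) + (if v = x ! i then 0 else 1)"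
proof -
  let ?D = "{j. j < length x \<and> j \<noteq> i \<and> x ! j \<noteq> y ! j}"
  have "{j. j < length x \<and> x ! j \<noteq> y[i := w] ! j} = ?D \<union> (if w = x ! i then {} else {i})" for w
    using assms by (auto simp: nth_list_update)
  then show ?thesis
    unfolding hdist_def by simp
qed

lemma hdist_list_update_nth_le:
  assumes "length y = length x"
  shows "hdist x (y[i := x ! i]) \<le> hdist x y"
  unfolding hdist_def
proof (rule card_mono)
  show "{j. j < length x \<and> x ! j \<noteq> y[i := x ! i] ! j} \<subseteq> {j. j < length x \<and> x ! j \<noteq> y ! j}"
    using assms by (cases "i < length y") (auto simp: nth_list_update)
qed simp

lemma hdist_take_append_le:
  assumes "length x = m + length zs"
  shows "hdist x (take m x @ zs) \<le> length zs"
proof -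
  have "{i. i < length x \<and> x ! i \<noteq> (take m x @ zs) ! i} \<subseteq> {m..<length x}"
    using assms by (auto simp: nth_append)
  then have "hdist x (take m x @ zs) \<le> card {m..<length x}"
    unfolding hdist_def by (intro card_mono) auto
  then show ?thesis
    using assms by simp
qed

lemma set_n_lists_upt: "set (List.n_lists m [0..<q]) = vecs q m"
  by (fastforce simp: set_n_lists vecs_def in_set_conv_nth)

definition padded_queries :: "nat \<Rightarrow> nat \<Rightarrow> nat \<Rightarrow> nat list list" where
  "padded_queries q n eps = map (\<lambda>z. z @ replicate eps 0) (List.n_lists (n - eps) [0..<q])"

lemma length_padded_queries: "length (padded_queries q n eps) = q ^ (n - eps)"
  by (simp add: padded_queries_def length_n_lists)

lemma padded_queries_vecs:
  assumes "0 < q" "eps \<le> n"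
  shows "set (padded_queries q n eps) \<subseteq> vecs q n"
  using assms by (auto simp: padded_queries_def set_n_lists_upt vecs_def nth_append)

lemma padded_queries_close:
  assumes "eps \<le> n" "x \<in> vecs q n"
  shows "\<exists>y \<in> set (padded_queries q n eps). hdist x y \<le> eps"
proof
  have "take (n - eps) x \<in> vecs q (n - eps)"
    using assms by (auto simp: vecs_def)
  then show "take (n - eps) x @ replicate eps 0 \<in> set (padded_queries q n eps)"
    by (simp add: padded_queries_def set_n_lists_upt)
  show "hdist x (take (n - eps) x @ replicate eps 0) \<le> eps"
    using hdist_take_append_le[of x "n - eps" "replicate eps 0"] assms by (simp add: vecs_def)
qed

definition matching_query :: "nat list list \<Rightarrow> nat option list \<Rightarrow> nat list" where
  "matching_query ys as = (SOME y. \<exists>d. (y, Some d) \<in> set (zip ys as))"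

lemma matching_query_close:
  assumes "\<exists>y \<in> set ys. hdist x y \<le> eps"
  defines "y \<equiv> matching_query ys (map (match_oracle x eps) ys)"
  shows "y \<in> set ys" "hdist x y \<le> eps"
proof -
  have "(z, a) \<in> set (zip ys (map (match_oracle x eps) ys)) \<longleftrightarrow> z \<in> set ys \<and> a = match_oracle x eps z"
    for z a
    by (auto simp: zip_map2 zip_same_conv_map)
  then have matches: "(\<exists>d. (z, Some d) \<in> set (zip ys (map (match_oracle x eps) ys))) \<longleftrightarrow>
      z \<in> set ys \<and> hdist x z \<le> eps" for z
    by (simp add: match_oracle_def)
  obtain z where "z \<in> set ys" "hdist x z \<le> eps"
    using assms by blast
  then have "\<exists>d. (z, Some d) \<in> set (zip ys (map (match_oracle x eps) ys))"
    using matches by simp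
  then have "\<exists>d. (y, Some d) \<in> set (zip ys (map (match_oracle x eps) ys))"
    unfolding y_def matching_query_def by (rule someI)
  then show "y \<in> set ys" "hdist x y \<le> eps"
    using matches by auto
qed

definition coordinate_queries :: "nat \<Rightarrow> nat list \<Rightarrow> nat list list list" where
  "coordinate_queries q y = map (\<lambda>i. map (\<lambda>v. y[i := v]) [0..<q]) [0..<length y]"

definition answer_rank :: "nat \<Rightarrow> nat option \<Rightarrow> nat" where
  "answer_rank eps a = (case a of None \<Rightarrow> Suc eps | Some d \<Rightarrow> d)"

lemma answer_rank_match_oracle:
  "answer_rank eps (match_oracle x eps y) = min (hdist x y) (Suc eps)"
  by (simp add: answer_rank_def match_oracle_def)

definition decode_coordinate :: "nat \<Rightarrow> nat option list \<Rightarrow> nat" where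
  "decode_coordinate eps as = arg_min_list (\<lambda>v. answer_rank eps (as ! v)) [0..<length as]"

lemma arg_min_list_unique:
  assumes "v \<in> set xs" "\<And>w. w \<in> set xs \<Longrightarrow> w \<noteq> v \<Longrightarrow> f v < f w"
  shows "arg_min_list f xs = v"
proof (rule ccontr)
  assume ne: "arg_min_list f xs \<noteq> v"
  have xs: "xs \<noteq> []"
    using assms(1) by auto
  have "f (arg_min_list f xs) \<le> f v"
    using assms(1) xs by (simp add: f_arg_min_list_f)
  moreover have "f v < f (arg_min_list f xs)"
    using assms(2)[OF arg_min_list_in[OF xs] ne] .
  ultimately show False
    by simp
qed

lemma decode_coordinate:
  assumes "x \<in> vecs q n" "y \<in> vecs q n" "hdist x y \<le> eps" "i < n"
  shows "decode_coordinate eps (map (\<lambda>v. match_oracle x eps (y[i := v])) [0..<q]) = x ! i"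
proof -
  have len: "length y = length x" "i < length x" and xi: "x ! i < q"
    using assms by (auto simp: vecs_def)
  let ?b = "hdist x (y[i := x ! i])"
  have "?b \<le> eps"
    using hdist_list_update_nth_le[OF len(1), of i] assms(3) by simp
  then have rank: "answer_rank eps (match_oracle x eps (y[i := v])) = ?b + (if v = x ! i then 0 else 1)"
    for v
    using hdist_list_update[OF len, of v] by (simp add: answer_rank_match_oracle)
  show ?thesis
    unfolding decode_coordinate_def using xi by (intro arg_min_list_unique) (auto simp: rank)
qed

lemma decode_coordinate_queries:
  assumes "x \<in> vecs q n" "y \<in> vecs q n" "hdist x y \<le> eps"
  shows "map (decode_coordinate eps) (map (map (match_oracle x eps)) (coordinate_queries q y)) = x"
  using assms decode_coordinate[OF assms]
  by (intro nth_equalityI) (auto simp: coordinate_queries_def vecs_def comp_def)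

lemma coordinate_queries_vecs:
  assumes "y \<in> vecs q n" "ys \<in> set (coordinate_queries q y)"
  shows "set ys \<subseteq> vecs q n"
  using assms by (auto simp: coordinate_queries_def vecs_def nth_list_update)

lemma sum_length_coordinate_queries:
  "sum_list (map length (coordinate_queries q y)) = length y * q"
  by (simp add: coordinate_queries_def comp_def sum_list_triv)

definition recovery_strategy :: "nat \<Rightarrow> nat \<Rightarrow> nat \<Rightarrow> strategy" where
  "recovery_strategy q n eps =
     query_batch (padded_queries q n eps) (\<lambda>as.
       query_batches (coordinate_queries q (matching_query (padded_queries q n eps) as)) (\<lambda>ass.
         Done (map (decode_coordinate eps) ass)))"

theorem recovery_strategy_correct:
  assumes "0 < q" "eps \<le> n" and x: "x \<in> vecs q n"
  shows "queries_ok q n x eps (recovery_strategy q n eps)"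
    and "run_output x eps (recovery_strategy q n eps) = x"
    and "cost x eps (recovery_strategy q n eps) = q ^ (n - eps) + n * q"
proof -
  let ?P = "padded_queries q n eps"
  define y where "y = matching_query ?P (map (match_oracle x eps) ?P)"
  have P: "set ?P \<subseteq> vecs q n"
    using assms(1,2) by (rule padded_queries_vecs)
  have "y \<in> set ?P" and close: "hdist x y \<le> eps"
    unfolding y_def using matching_query_close padded_queries_close[OF assms(2) x] by blast+
  then have y: "y \<in> vecs q n"
    using P by blast
  show "queries_ok q n x eps (recovery_strategy q n eps)"
    using P coordinate_queries_vecs[OF y]
    by (simp add: recovery_strategy_def queries_ok_query_batch queries_ok_query_batches y_def)
  show "run_output x eps (recovery_strategy q n eps) = x"
    using decode_coordinate_queries[OF x y close]
    by (simp add: recovery_strategy_def run_output_query_batch run_output_query_batches y_def)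
  show "cost x eps (recovery_strategy q n eps) = q ^ (n - eps) + n * q"
    using y
    by (simp add: recovery_strategy_def cost_query_batch cost_query_batches y_def
        length_padded_queries sum_length_coordinate_queries vecs_def)
qed

lemma mult_le_power:
  assumes "2 \<le> (q::nat)"
  shows "q * m \<le> q ^ m"
proof (cases "m > 0")
  case True
  then show ?thesis
  proof (induction m rule: nat_induct_non_zero)
    case (Suc m)
    have "q * Suc m \<le> q ^ m + q ^ m"
      using Suc self_le_power[of q m] assms by simp
    also have "\<dots> = 2 * q ^ m"
      by simp
    also have "\<dots> \<le> q ^ Suc m"
      using assms by simp
    finally show ?case .
  qed simp
qed simp

theorem theorem1:
  shows "\<exists>C::real. C > 0 \<and>
    (\<forall>q n eps::nat. q \<ge> 2 \<longrightarrow> n \<ge> 1 \<longrightarrow> eps \<le> n \<longrightarrow>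
      (\<exists>s::strategy. \<forall>x \<in> vecs q n.
          queries_ok q n x eps s \<and> run_output x eps s = x \<and>
          real (cost x eps s) \<le> C * (real q ^ (n - eps) + real q * real eps)))"
proof (intro exI[of _ 2] conjI allI impI)
  fix q n eps :: nat
  assume q: "q \<ge> 2" and "n \<ge> 1" and eps: "eps \<le> n"
  have "n * q = q * (n - eps) + q * eps"
    using eps by (simp add: algebra_simps)
  then have "q ^ (n - eps) + n * q \<le> 2 * (q ^ (n - eps) + q * eps)"
    using mult_le_power[OF q, of "n - eps"] by simp
  then have "real (q ^ (n - eps) + n * q) \<le> real (2 * (q ^ (n - eps) + q * eps))"
    by (rule of_nat_mono)
  then have bound: "real (q ^ (n - eps) + n * q) \<le> 2 * (real q ^ (n - eps) + real q * real eps)"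
    by simp
  have "\<forall>x \<in> vecs q n. queries_ok q n x eps (recovery_strategy q n eps) \<and>
      run_output x eps (recovery_strategy q n eps) = x \<and>
      real (cost x eps (recovery_strategy q n eps)) \<le> 2 * (real q ^ (n - eps) + real q * real eps)"
    using recovery_strategy_correct[of q eps n] q eps bound by simp
  then show "\<exists>s. \<forall>x \<in> vecs q n. queries_ok q n x eps s \<and> run_output x eps s = x \<and>
      real (cost x eps s) \<le> 2 * (real q ^ (n - eps) + real q * real eps)"
    by blast
qed simp

end
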